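(* Let $\mathcal{H}=\bigotimes_{i=1}^n\mathbb{C}^{d_i}$, let $|\psi\rangle\in\mathcal{H}$ be a fully entangled pure state whose stabilizer $\mathcal{S}_\psi$ consists only of unitary operators (i.e. $\mathcal{S}_\psi\subseteq U(d_1)\otimes\cdots\otimes U(d_n)$), and let $g=g_1\otimes\cdots\otimes g_n$, $h=h_1\otimes\cdots\otimes h_n$ with $g_i,h_i\in GL(d_i,\mathbb{C})$ such that $\|g|\psi\rangle\|=\|h|\psi\rangle\|=1$. Put $G=g^\dagger g$, $H=h^\dagger h$. If $g|\psi\rangle$ can be transformed into $h|\psi\rangle$ via SEP, then $\operatorname{tr}(G)\ge\operatorname{tr}(H)$. Moreover, if $\operatorname{tr}(G)=\operatorname{tr}(H)$, then $g|\psi\rangle$ can be transformed into $h|\psi\rangle$ via SEP if and only if there exist finitely many probabilities $p_k\ge0$ with $\sum_kp_k=1$ and symmetries $S_k\in\mathcal{S}_\psi$ such that $\sum_kp_kS_k^\dagger HS_k=G$, i.e. if and only if the transformation is possible via $\mathrm{SEP}_1$.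
   Context: A pure state is fully entangled if each single-party reduced density matrix $\rho_i$ has rank $d_i$. The stabilizer $\mathcal{S}_\psi$ is the set of operators $S=S^{(1)}\otimes\cdots\otimes S^{(n)}$ with $S^{(i)}\in GL(d_i,\mathbb{C})$ and $S|\psi\rangle=|\psi\rangle$. A CPTP map on $\mathcal{B}(\mathcal{H})$ is in SEP if it has a Kraus decomposition with all Kraus operators of product form $\bigotimes_jK^{(j)}$, $K^{(j)}\in M(d_j,\mathbb{C})$; it is in $\mathrm{SEP}_1$ if moreover all $K^{(j)}$ can be chosen in $GL(d_j,\mathbb{C})$. A state $|\alpha\rangle$ can be transformed into $|\beta\rangle$ via a class of maps if some map $\Lambda$ in the class satisfies $\Lambda(|\alpha\rangle\langle\alpha|)=|\beta\rangle\langle\beta|$. *)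

theory Defs
  imports "HOL-Analysis.Analysis" "Jordan_Normal_Form.DL_Rank"
begin

text \<open>The Hilbert space H = C^{d_0} (x) ... (x) C^{d_(n-1)} is modelled as complex functions
on multi-indices xs (lists of length n with xs!j < d j), vanishing outside this index set.
Operators on H are kernels  nat list => nat list => complex  vanishing outside idx x idx.\<close>

definition idx :: "nat \<Rightarrow> (nat \<Rightarrow> nat) \<Rightarrow> nat list set" where
  "idx n d = {xs. length xs = n \<and> (\<forall>j<n. xs ! j < d j)}"

type_synonym state = "nat list \<Rightarrow> complex"
type_synonym oper = "nat list \<Rightarrow> nat list \<Rightarrow> complex"

definition in_space :: "nat \<Rightarrow> (nat \<Rightarrow> nat) \<Rightarrow> state \<Rightarrow> bool" where
  "in_space n d v \<longleftrightarrow> (\<forall>xs. xs \<notin> idx n d \<longrightarrow> v xs = 0)"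

definition op_apply :: "nat \<Rightarrow> (nat \<Rightarrow> nat) \<Rightarrow> oper \<Rightarrow> state \<Rightarrow> state" where
  "op_apply n d A v = (\<lambda>xs. \<Sum>ys\<in>idx n d. A xs ys * v ys)"

definition op_mult :: "nat \<Rightarrow> (nat \<Rightarrow> nat) \<Rightarrow> oper \<Rightarrow> oper \<Rightarrow> oper" where
  "op_mult n d A B = (\<lambda>xs ys. \<Sum>zs\<in>idx n d. A xs zs * B zs ys)"

definition op_adj :: "oper \<Rightarrow> oper" where
  "op_adj A = (\<lambda>xs ys. cnj (A ys xs))"

definition op_id :: "nat \<Rightarrow> (nat \<Rightarrow> nat) \<Rightarrow> oper" where
  "op_id n d = (\<lambda>xs ys. if xs \<in> idx n d \<and> xs = ys then 1 else 0)"

definition op_trace :: "nat \<Rightarrow> (nat \<Rightarrow> nat) \<Rightarrow> oper \<Rightarrow> complex" where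
  "op_trace n d A = (\<Sum>xs\<in>idx n d. A xs xs)"

definition ketbra :: "state \<Rightarrow> state \<Rightarrow> oper" where
  "ketbra a b = (\<lambda>xs ys. a xs * cnj (b ys))"

definition vnorm :: "nat \<Rightarrow> (nat \<Rightarrow> nat) \<Rightarrow> state \<Rightarrow> real" where
  "vnorm n d v = sqrt (\<Sum>xs\<in>idx n d. (cmod (v xs))\<^sup>2)"

definition prod_op :: "nat \<Rightarrow> (nat \<Rightarrow> nat) \<Rightarrow> (nat \<Rightarrow> complex mat) \<Rightarrow> oper" where
  "prod_op n d K = (\<lambda>xs ys. if xs \<in> idx n d \<and> ys \<in> idx n d
       then (\<Prod>j<n. K j $$ (xs ! j, ys ! j)) else 0)"

definition local_mats :: "nat \<Rightarrow> (nat \<Rightarrow> nat) \<Rightarrow> (nat \<Rightarrow> complex mat) \<Rightarrow> bool" where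
  "local_mats n d K \<longleftrightarrow> (\<forall>j<n. K j \<in> carrier_mat (d j) (d j))"

definition local_GL :: "nat \<Rightarrow> (nat \<Rightarrow> nat) \<Rightarrow> (nat \<Rightarrow> complex mat) \<Rightarrow> bool" where
  "local_GL n d K \<longleftrightarrow> local_mats n d K \<and> (\<forall>j<n. invertible_mat (K j))"

definition cadj :: "complex mat \<Rightarrow> complex mat" where
  "cadj A = mat (dim_col A) (dim_row A) (\<lambda>(i,j). cnj (A $$ (j,i)))"

definition unitary_mat :: "nat \<Rightarrow> complex mat \<Rightarrow> bool" where
  "unitary_mat m U \<longleftrightarrow> U \<in> carrier_mat m m \<and> cadj U * U = 1\<^sub>m m"

definition local_U :: "nat \<Rightarrow> (nat \<Rightarrow> nat) \<Rightarrow> (nat \<Rightarrow> complex mat) \<Rightarrow> bool" where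
  "local_U n d K \<longleftrightarrow> (\<forall>j<n. unitary_mat (d j) (K j))"

definition reduced :: "nat \<Rightarrow> (nat \<Rightarrow> nat) \<Rightarrow> state \<Rightarrow> nat \<Rightarrow> complex mat" where
  "reduced n d psi i = mat (d i) (d i) (\<lambda>(a,b).
      \<Sum>xs\<in>{xs\<in>idx n d. xs ! i = a}. psi xs * cnj (psi (xs[i := b])))"

definition fully_entangled :: "nat \<Rightarrow> (nat \<Rightarrow> nat) \<Rightarrow> state \<Rightarrow> bool" where
  "fully_entangled n d psi \<longleftrightarrow>
     (\<forall>i<n. vec_space.rank (d i) (reduced n d psi i) = d i)"

definition stabilizer :: "nat \<Rightarrow> (nat \<Rightarrow> nat) \<Rightarrow> state \<Rightarrow> oper set" where
  "stabilizer n d psi = {S. \<exists>K. local_GL n d K \<and> S = prod_op n d K \<and> op_apply n d S psi = psi}"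

definition kraus_apply :: "nat \<Rightarrow> (nat \<Rightarrow> nat) \<Rightarrow> (nat \<Rightarrow> complex mat) list \<Rightarrow> oper \<Rightarrow> oper" where
  "kraus_apply n d Ks rho = (\<lambda>xs ys. \<Sum>K\<leftarrow>Ks.
      op_mult n d (op_mult n d (prod_op n d K) rho) (op_adj (prod_op n d K)) xs ys)"

definition trace_preserving :: "nat \<Rightarrow> (nat \<Rightarrow> nat) \<Rightarrow> (nat \<Rightarrow> complex mat) list \<Rightarrow> bool" where
  "trace_preserving n d Ks \<longleftrightarrow>
     (\<lambda>xs ys. \<Sum>K\<leftarrow>Ks. op_mult n d (op_adj (prod_op n d K)) (prod_op n d K) xs ys) = op_id n d"

definition SEP_transformable :: "nat \<Rightarrow> (nat \<Rightarrow> nat) \<Rightarrow> state \<Rightarrow> state \<Rightarrow> bool" where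
  "SEP_transformable n d alpha beta \<longleftrightarrow> (\<exists>Ks.
      (\<forall>K\<in>set Ks. local_mats n d K) \<and> trace_preserving n d Ks \<and>
      kraus_apply n d Ks (ketbra alpha alpha) = ketbra beta beta)"

definition SEP1_transformable :: "nat \<Rightarrow> (nat \<Rightarrow> nat) \<Rightarrow> state \<Rightarrow> state \<Rightarrow> bool" where
  "SEP1_transformable n d alpha beta \<longleftrightarrow> (\<exists>Ks.
      (\<forall>K\<in>set Ks. local_GL n d K) \<and> trace_preserving n d Ks \<and>
      kraus_apply n d Ks (ketbra alpha alpha) = ketbra beta beta)"

end

theory Submission
  imports Defs
begin

text \<open>Let a separable channel with product Kraus operators K map g psi to the pure state h psi.
  Then each K maps g psi to a multiple c(K) h psi, where the squares |c(K)|^2 sum to 1. If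
  c(K) \<noteq> 0, the product operator h^-1 K g has the fully entangled state psi as an eigenvector
  with nonzero eigenvalue, which forces all its local factors to be invertible; hence
  K g = c(K) h S(K) for a symmetry S(K) of psi, unitary by hypothesis. Sandwiching the
  trace-preservation identity between g^* and g gives
  tr G = \<Sum> |c(K)|^2 tr (S(K)^* H S(K)) + (sum of |K g|^2 over c(K) = 0) \<ge> tr H.
  If the traces agree, the Kraus operators with c(K) = 0 vanish on the range of g, so
  G = \<Sum> |c(K)|^2 S(K)^* H S(K). Conversely, such a decomposition with weights p(k) > 0 defines
  the invertible Kraus operators sqrt p(k) h S(k) g^-1.\<close>

section \<open>Multi-indices\<close>

lemma idx_0: "idx 0 d = {[]}"
  unfolding idx_def by auto

lemma idx_Suc: "idx (Suc n) d = (\<lambda>(xs, z). xs @ [z]) ` (idx n d \<times> {..<d n})"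
proof (intro equalityI subsetI)
  fix ys assume "ys \<in> idx (Suc n) d"
  then have l: "length ys = Suc n" and b: "\<forall>j<Suc n. ys ! j < d j" by (auto simp: idx_def)
  then have "ys = butlast ys @ [last ys]"
    by (metis append_butlast_last_id list.size(3) nat.distinct(1))
  moreover have "butlast ys \<in> idx n d" using l b by (auto simp: idx_def nth_butlast)
  moreover have "last ys < d n" using l b
    by (metis last_conv_nth lessI list.size(3) nat.distinct(1) diff_Suc_1)
  ultimately show "ys \<in> (\<lambda>(xs, z). xs @ [z]) ` (idx n d \<times> {..<d n})" by force
qed (auto simp: idx_def nth_append less_Suc_eq)

lemma inj_on_snoc_idx: "inj_on (\<lambda>(xs, z). xs @ [z]) (idx n d \<times> {..<d n})"
  by (auto simp: inj_on_def idx_def)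

lemma finite_idx [simp]: "finite (idx n d)"
  by (induction n) (simp_all add: idx_0 idx_Suc)

lemma idx_nth: "xs \<in> idx n d \<Longrightarrow> j < n \<Longrightarrow> xs ! j < d j"
  unfolding idx_def by auto

lemma idx_update: "xs \<in> idx n d \<Longrightarrow> j < n \<Longrightarrow> a < d j \<Longrightarrow> xs[j := a] \<in> idx n d"
  unfolding idx_def by (auto simp: nth_list_update)

lemma sum_idx_prod:
  "(\<Sum>xs\<in>idx n d. \<Prod>j<n. f j (xs ! j)) = (\<Prod>j<n. \<Sum>z<d j. (f j z :: 'a::comm_semiring_1))"
proof (induction n)
  case 0
  then show ?case by (simp add: idx_0)
next
  case (Suc n)
  have snoc: "(\<Prod>j<Suc n. f j ((xs @ [z]) ! j)) = (\<Prod>j<n. f j (xs ! j)) * f n z"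
    if "xs \<in> idx n d" for xs z
  proof -
    have l: "length xs = n" using that by (simp add: idx_def)
    then have "(\<Prod>j<n. f j ((xs @ [z]) ! j)) = (\<Prod>j<n. f j (xs ! j))"
      by (intro prod.cong) (auto simp: nth_append)
    then show ?thesis using l by (simp add: nth_append)
  qed
  have "(\<Sum>xs\<in>idx (Suc n) d. \<Prod>j<Suc n. f j (xs ! j))
      = (\<Sum>(xs, z)\<in>idx n d \<times> {..<d n}. (\<Prod>j<n. f j (xs ! j)) * f n z)"
    unfolding idx_Suc sum.reindex[OF inj_on_snoc_idx]
    by (intro sum.cong) (auto simp: snoc simp del: prod.lessThan_Suc)
  also have "\<dots> = (\<Sum>xs\<in>idx n d. \<Prod>j<n. f j (xs ! j)) * (\<Sum>z<d n. f n z)"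
    by (simp add: sum_product sum.cartesian_product)
  finally show ?case using Suc by simp
qed

section \<open>Operators on the tensor product\<close>

definition op_supported :: "nat \<Rightarrow> (nat \<Rightarrow> nat) \<Rightarrow> oper \<Rightarrow> bool" where
  "op_supported n d A \<longleftrightarrow> (\<forall>xs ys. xs \<notin> idx n d \<or> ys \<notin> idx n d \<longrightarrow> A xs ys = 0)"

lemma op_supported_prod_op: "op_supported n d (prod_op n d K)"
  unfolding op_supported_def prod_op_def by auto

lemma op_supported_id: "op_supported n d (op_id n d)"
  unfolding op_supported_def op_id_def by auto

lemma op_supported_mult: "op_supported n d A \<Longrightarrow> op_supported n d B \<Longrightarrow> op_supported n d (op_mult n d A B)"
  unfolding op_supported_def op_mult_def by auto

lemma op_supported_adj: "op_supported n d A \<Longrightarrow> op_supported n d (op_adj A)"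
  unfolding op_supported_def op_adj_def by auto

lemma in_space_op_apply: "op_supported n d A \<Longrightarrow> in_space n d (op_apply n d A v)"
  unfolding op_supported_def in_space_def op_apply_def by auto

lemma op_mult_assoc: "op_mult n d (op_mult n d A B) C = op_mult n d A (op_mult n d B C)"
  unfolding op_mult_def
  by (intro ext) (simp add: sum_distrib_left sum_distrib_right mult.assoc, rule sum.swap)

lemma op_apply_mult: "op_apply n d (op_mult n d A B) v = op_apply n d A (op_apply n d B v)"
  unfolding op_mult_def op_apply_def
  by (intro ext) (simp add: sum_distrib_left sum_distrib_right mult.assoc, rule sum.swap)

lemma op_adj_mult: "op_adj (op_mult n d A B) = op_mult n d (op_adj B) (op_adj A)"
  unfolding op_mult_def op_adj_def by (intro ext) (simp add: mult.commute)

lemma op_adj_id: "op_adj (op_id n d) = op_id n d"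
  unfolding op_adj_def op_id_def by (intro ext) auto

lemma op_mult_id_left: "op_supported n d A \<Longrightarrow> op_mult n d (op_id n d) A = A"
  unfolding op_mult_def op_id_def op_supported_def
  by (intro ext, case_tac "xs \<in> idx n d") (auto simp: if_distrib if_distribR sum.delta cong: if_cong)

lemma op_mult_id_right: "op_supported n d A \<Longrightarrow> op_mult n d A (op_id n d) = A"
  unfolding op_mult_def op_id_def op_supported_def
  by (intro ext, case_tac "xa \<in> idx n d") (auto simp: if_distrib if_distribR sum.delta' cong: if_cong)

lemma op_apply_id: "in_space n d v \<Longrightarrow> op_apply n d (op_id n d) v = v"
  unfolding op_apply_def op_id_def in_space_def
  by (intro ext, case_tac "xs \<in> idx n d") (auto simp: if_distrib if_distribR sum.delta cong: if_cong)

lemma op_mult_zero_right [simp]: "op_mult n d A (\<lambda>_ _. 0) = (\<lambda>_ _. 0)"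
  unfolding op_mult_def by simp

lemma op_adj_zero [simp]: "op_adj (\<lambda>_ _. 0) = (\<lambda>_ _. 0)"
  unfolding op_adj_def by simp

lemma op_mult_sum_left:
  "op_mult n d (\<lambda>xs ys. \<Sum>k\<leftarrow>ks. F k xs ys) A = (\<lambda>xs ys. \<Sum>k\<leftarrow>ks. op_mult n d (F k) A xs ys)"
  by (intro ext, induction ks) (simp_all add: op_mult_def distrib_right sum.distrib)

lemma op_mult_sum_right:
  "op_mult n d A (\<lambda>xs ys. \<Sum>k\<leftarrow>ks. F k xs ys) = (\<lambda>xs ys. \<Sum>k\<leftarrow>ks. op_mult n d A (F k) xs ys)"
  by (intro ext, induction ks) (simp_all add: op_mult_def distrib_left sum.distrib)

lemma op_trace_sum: "op_trace n d (\<lambda>xs ys. \<Sum>k\<leftarrow>ks. F k xs ys) = (\<Sum>k\<leftarrow>ks. op_trace n d (F k))"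
  by (induction ks) (simp_all add: op_trace_def sum.distrib)

lemma op_trace_commute: "op_trace n d (op_mult n d A B) = op_trace n d (op_mult n d B A)"
  unfolding op_trace_def op_mult_def by (subst sum.swap) (simp add: mult.commute)

lemma ketbra_sandwich:
  "op_mult n d (op_mult n d A (ketbra a b)) (op_adj B) = ketbra (op_apply n d A a) (op_apply n d B b)"
  unfolding op_mult_def ketbra_def op_adj_def op_apply_def
  by (intro ext) (simp add: sum_distrib_left sum_distrib_right ac_simps)

definition op_scale :: "complex \<Rightarrow> oper \<Rightarrow> oper" where
  "op_scale c A = (\<lambda>xs ys. c * A xs ys)"

lemma op_mult_scale_left: "op_mult n d (op_scale c A) B = op_scale c (op_mult n d A B)"
  unfolding op_scale_def op_mult_def by (simp add: sum_distrib_left mult.assoc)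

lemma op_mult_scale_right: "op_mult n d A (op_scale c B) = op_scale c (op_mult n d A B)"
  unfolding op_scale_def op_mult_def by (simp add: sum_distrib_left ac_simps)

lemma op_adj_scale: "op_adj (op_scale c A) = op_scale (cnj c) (op_adj A)"
  unfolding op_scale_def op_adj_def by simp

lemma op_scale_scale: "op_scale a (op_scale b A) = op_scale (a * b) A"
  unfolding op_scale_def by (simp add: mult.assoc)

lemma op_scale_one [simp]: "op_scale 1 A = A"
  unfolding op_scale_def by simp

lemma op_apply_scale: "op_apply n d (op_scale c A) v = (\<lambda>xs. c * op_apply n d A v xs)"
  unfolding op_scale_def op_apply_def by (simp add: sum_distrib_left mult.assoc)

lemma op_apply_scale_state: "op_apply n d A (\<lambda>xs. c * v xs) = (\<lambda>xs. c * op_apply n d A v xs)"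
  unfolding op_apply_def by (simp add: sum_distrib_left ac_simps)

lemma op_trace_scale: "op_trace n d (op_scale c A) = c * op_trace n d A"
  unfolding op_trace_def op_scale_def by (simp add: sum_distrib_left)

lemma gram_scale: "op_mult n d (op_adj (op_scale c A)) (op_scale c A)
    = op_scale (of_real ((cmod c)\<^sup>2)) (op_mult n d (op_adj A) A)"
  unfolding op_adj_scale op_mult_scale_left op_mult_scale_right op_scale_scale complex_norm_square
  by (simp add: mult.commute)

definition hs_norm_sq :: "nat \<Rightarrow> (nat \<Rightarrow> nat) \<Rightarrow> oper \<Rightarrow> real" where
  "hs_norm_sq n d A = (\<Sum>xs\<in>idx n d. \<Sum>ys\<in>idx n d. (cmod (A xs ys))\<^sup>2)"

lemma op_trace_gram: "op_trace n d (op_mult n d (op_adj A) A) = of_real (hs_norm_sq n d A)"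
  unfolding op_trace_def op_mult_def op_adj_def hs_norm_sq_def
  by (subst sum.swap) (simp add: of_real_sum complex_norm_square mult.commute del: of_real_power)

lemma hs_norm_sq_nonneg: "0 \<le> hs_norm_sq n d A"
  unfolding hs_norm_sq_def by (intro sum_nonneg) auto

lemma hs_norm_sq_eq_0:
  assumes "op_supported n d A" and "hs_norm_sq n d A = 0"
  shows "A = (\<lambda>_ _. 0)"
proof (intro ext)
  fix xs ys
  have "\<forall>xs\<in>idx n d. \<forall>ys\<in>idx n d. (cmod (A xs ys))\<^sup>2 = 0"
    using assms(2) unfolding hs_norm_sq_def
    by (simp add: sum_nonneg_eq_0_iff sum_nonneg)
  then show "A xs ys = 0" using assms(1) unfolding op_supported_def by auto
qed

section \<open>Product operators\<close>

lemma invertible_mat_inverse: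
  assumes A: "A \<in> carrier_mat m m" and inv: "invertible_mat A"
  obtains B where "B \<in> carrier_mat m m" "A * B = 1\<^sub>m m" "B * A = 1\<^sub>m m"
proof -
  from inv obtain B where AB: "A * B = 1\<^sub>m (dim_row A)" and BA: "B * A = 1\<^sub>m (dim_row B)"
    unfolding invertible_mat_def inverts_mat_def by blast
  have "dim_col B = m" using arg_cong[OF AB, of dim_col] A by auto
  moreover have "dim_row B = m" using arg_cong[OF BA, of dim_col] A by auto
  ultimately show ?thesis using that AB BA A by auto
qed

lemma invertible_mat_iff_det_nonzero:
  assumes A: "(A :: 'a::field mat) \<in> carrier_mat m m"
  shows "invertible_mat A \<longleftrightarrow> det A \<noteq> 0"
proof
  assume "invertible_mat A"
  then obtain B where B: "B \<in> carrier_mat m m" "A * B = 1\<^sub>m m"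
    using invertible_mat_inverse[OF A] by metis
  have "det A * det B = 1" using det_mult[OF A B(1)] B(2) by simp
  then show "det A \<noteq> 0" by auto
next
  assume "det A \<noteq> 0"
  from det_non_zero_imp_unit[OF A this, of "()"]
  obtain B where "B \<in> carrier_mat m m" "B * A = 1\<^sub>m m" "A * B = 1\<^sub>m m"
    unfolding Units_def ring_mat_def by auto
  then show "invertible_mat A"
    using A unfolding invertible_mat_def inverts_mat_def by auto
qed

lemma cadj_carrier: "A \<in> carrier_mat m m \<Longrightarrow> cadj A \<in> carrier_mat m m"
  unfolding cadj_def by auto

lemma cadj_index: "A \<in> carrier_mat m m \<Longrightarrow> a < m \<Longrightarrow> b < m \<Longrightarrow> cadj A $$ (a, b) = cnj (A $$ (b, a))"
  unfolding cadj_def by auto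

lemma unitary_mat_mult_cadj: "unitary_mat m U \<Longrightarrow> U * cadj U = 1\<^sub>m m"
  unfolding unitary_mat_def using mat_mult_left_right_inverse cadj_carrier by blast

lemma local_mats_mult: "local_mats n d K \<Longrightarrow> local_mats n d L \<Longrightarrow> local_mats n d (\<lambda>j. K j * L j)"
  unfolding local_mats_def by auto

lemma local_mats_cadj: "local_mats n d K \<Longrightarrow> local_mats n d (\<lambda>j. cadj (K j))"
  unfolding local_mats_def by (auto intro: cadj_carrier)

lemma local_GL_iff_det_nonzero:
  "local_mats n d K \<Longrightarrow> local_GL n d K \<longleftrightarrow> (\<forall>j<n. det (K j) \<noteq> 0)"
  unfolding local_GL_def local_mats_def using invertible_mat_iff_det_nonzero by blast

lemma local_GL_mats: "local_GL n d K \<Longrightarrow> local_mats n d K"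
  unfolding local_GL_def by simp

lemma local_GL_one: "local_GL n d (\<lambda>j. 1\<^sub>m (d j))"
  by (simp add: local_GL_iff_det_nonzero local_mats_def)

lemma local_GL_mult:
  assumes K: "local_GL n d K" and L: "local_GL n d L"
  shows "local_GL n d (\<lambda>j. K j * L j)"
proof -
  have mats: "local_mats n d K" "local_mats n d L"
    using K L by (simp_all add: local_GL_mats)
  have "det (K j * L j) \<noteq> 0" if j: "j < n" for j
  proof -
    have "K j \<in> carrier_mat (d j) (d j)" "L j \<in> carrier_mat (d j) (d j)"
      using mats j by (auto simp: local_mats_def)
    then have "det (K j * L j) = det (K j) * det (L j)" by (rule det_mult)
    then show ?thesis
      using K L j mats by (simp add: local_GL_iff_det_nonzero)
  qed
  then show ?thesis by (simp add: local_GL_iff_det_nonzero local_mats_mult mats)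
qed

lemma local_GL_scale_first:
  assumes "0 < n" and K: "local_GL n d K" and c: "c \<noteq> 0"
  shows "local_GL n d (K(0 := c \<cdot>\<^sub>m K 0))"
proof -
  have mats: "local_mats n d K" using K by (rule local_GL_mats)
  have K0: "K 0 \<in> carrier_mat (d 0) (d 0)"
    using assms mats by (auto simp: local_mats_def)
  have mats': "local_mats n d (K(0 := c \<cdot>\<^sub>m K 0))"
    using mats K0 by (auto simp: local_mats_def)
  have "det (K 0) \<noteq> 0" using K assms(1) mats by (simp add: local_GL_iff_det_nonzero)
  then have "det (c \<cdot>\<^sub>m K 0) \<noteq> 0" using c by simp
  then show ?thesis
    using K mats unfolding local_GL_iff_det_nonzero[OF mats'] local_GL_iff_det_nonzero[OF mats]
    by simp
qed

lemma prod_op_cong: "(\<And>j. j < n \<Longrightarrow> K j = L j) \<Longrightarrow> prod_op n d K = prod_op n d L"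
  unfolding prod_op_def by (intro ext) auto

lemma prod_op_no_parties: "prod_op 0 d K = op_id 0 d"
  unfolding prod_op_def op_id_def idx_0 by (intro ext) auto

lemma prod_op_mult:
  assumes K: "local_mats n d K" and L: "local_mats n d L"
  shows "op_mult n d (prod_op n d K) (prod_op n d L) = prod_op n d (\<lambda>j. K j * L j)"
proof (intro ext)
  fix xs ys
  show "op_mult n d (prod_op n d K) (prod_op n d L) xs ys = prod_op n d (\<lambda>j. K j * L j) xs ys"
  proof (cases "xs \<in> idx n d \<and> ys \<in> idx n d")
    case True
    have "op_mult n d (prod_op n d K) (prod_op n d L) xs ys
        = (\<Sum>zs\<in>idx n d. \<Prod>j<n. K j $$ (xs ! j, zs ! j) * L j $$ (zs ! j, ys ! j))"
      using True unfolding op_mult_def prod_op_def by (intro sum.cong) (auto simp: prod.distrib)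
    also have "\<dots> = (\<Prod>j<n. \<Sum>z<d j. K j $$ (xs ! j, z) * L j $$ (z, ys ! j))"
      by (rule sum_idx_prod)
    also have "\<dots> = (\<Prod>j<n. (K j * L j) $$ (xs ! j, ys ! j))"
    proof (rule prod.cong[OF refl])
      fix j assume "j \<in> {..<n}"
      then have "K j \<in> carrier_mat (d j) (d j)" "L j \<in> carrier_mat (d j) (d j)"
        "xs ! j < d j" "ys ! j < d j"
        using K L True by (auto simp: local_mats_def idx_nth)
      then show "(\<Sum>z<d j. K j $$ (xs ! j, z) * L j $$ (z, ys ! j)) = (K j * L j) $$ (xs ! j, ys ! j)"
        by (simp add: scalar_prod_def atLeast0LessThan)
    qed
    finally show ?thesis using True unfolding prod_op_def by simp
  qed (auto simp: op_mult_def prod_op_def)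
qed

lemma prod_op_adj:
  "local_mats n d K \<Longrightarrow> op_adj (prod_op n d K) = prod_op n d (\<lambda>j. cadj (K j))"
  unfolding op_adj_def prod_op_def
  by (intro ext) (auto intro!: prod.cong simp: cadj_index local_mats_def idx_nth)

lemma prod_op_one: "prod_op n d (\<lambda>j. 1\<^sub>m (d j)) = op_id n d"
proof (intro ext)
  fix xs ys
  show "prod_op n d (\<lambda>j. 1\<^sub>m (d j)) xs ys = op_id n d xs ys"
  proof (cases "xs \<in> idx n d \<and> ys \<in> idx n d")
    case True
    then have l: "length xs = n" "length ys = n" by (auto simp: idx_def)
    have "(\<Prod>j<n. (1\<^sub>m (d j) :: complex mat) $$ (xs ! j, ys ! j))
        = (\<Prod>j<n. if xs ! j = ys ! j then 1 else 0)"
      using True by (intro prod.cong) (auto simp: idx_nth)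
    also have "\<dots> = (if xs = ys then 1 else 0)"
    proof (cases "xs = ys")
      case False
      then obtain j where j: "j < n" "xs ! j \<noteq> ys ! j" using l nth_equalityI by metis
      have "(\<Prod>j<n. if xs ! j = ys ! j then 1 else 0) = (0::complex)"
        by (rule prod_zero) (use j in auto)
      then show ?thesis using False by simp
    qed simp
    finally show ?thesis using True unfolding prod_op_def op_id_def by simp
  qed (auto simp: prod_op_def op_id_def)
qed

lemma prod_op_inverse:
  assumes "local_GL n d K"
  obtains Ki where "local_GL n d Ki"
    "op_mult n d (prod_op n d K) (prod_op n d Ki) = op_id n d"
    "op_mult n d (prod_op n d Ki) (prod_op n d K) = op_id n d"
proof -
  have "\<forall>j. \<exists>B. j < n \<longrightarrow> B \<in> carrier_mat (d j) (d j) \<and> K j * B = 1\<^sub>m (d j) \<and> B * K j = 1\<^sub>m (d j)"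
    using assms invertible_mat_inverse unfolding local_GL_def local_mats_def by metis
  then obtain Ki where Ki: "\<And>j. j < n \<Longrightarrow>
      Ki j \<in> carrier_mat (d j) (d j) \<and> K j * Ki j = 1\<^sub>m (d j) \<and> Ki j * K j = 1\<^sub>m (d j)"
    by metis
  have K: "local_mats n d K" and Ki_mats: "local_mats n d Ki"
    using assms Ki by (auto simp: local_GL_def local_mats_def)
  have "invertible_mat (Ki j)" if j: "j < n" for j
  proof -
    have "K j \<in> carrier_mat (d j) (d j)" using K j by (simp add: local_mats_def)
    then show ?thesis
      using Ki[OF j] unfolding invertible_mat_def inverts_mat_def by auto
  qed
  then have "local_GL n d Ki" using Ki_mats by (simp add: local_GL_def)
  moreover have "op_mult n d (prod_op n d K) (prod_op n d Ki) = op_id n d"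
    unfolding prod_op_mult[OF K Ki_mats] prod_op_one[symmetric] using Ki by (intro prod_op_cong) auto
  moreover have "op_mult n d (prod_op n d Ki) (prod_op n d K) = op_id n d"
    unfolding prod_op_mult[OF Ki_mats K] prod_op_one[symmetric] using Ki by (intro prod_op_cong) auto
  ultimately show ?thesis using that by blast
qed

lemma prod_op_scale_first:
  assumes "0 < n" and K0: "K 0 \<in> carrier_mat (d 0) (d 0)"
  shows "prod_op n d (K(0 := c \<cdot>\<^sub>m K 0)) = op_scale c (prod_op n d K)"
proof (intro ext)
  fix xs ys
  show "prod_op n d (K(0 := c \<cdot>\<^sub>m K 0)) xs ys = op_scale c (prod_op n d K) xs ys"
  proof (cases "xs \<in> idx n d \<and> ys \<in> idx n d")
    case True
    have "(\<Prod>j<n. (K(0 := c \<cdot>\<^sub>m K 0)) j $$ (xs ! j, ys ! j))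
        = c * K 0 $$ (xs ! 0, ys ! 0) * (\<Prod>j\<in>{..<n} - {0}. K j $$ (xs ! j, ys ! j))"
      using assms True idx_nth[of xs n d 0] idx_nth[of ys n d 0]
      by (subst prod.remove[of _ 0]) (auto intro!: prod.cong)
    also have "\<dots> = c * (\<Prod>j<n. K j $$ (xs ! j, ys ! j))"
      using assms by (subst (2) prod.remove[of _ 0]) auto
    finally show ?thesis using True unfolding prod_op_def op_scale_def by simp
  qed (auto simp: prod_op_def op_scale_def)
qed

lemma prod_op_update_row:
  assumes xs: "xs \<in> idx n d" and ys: "ys \<in> idx n d" and j: "j < n" and a: "a < d j"
  shows "prod_op n d X (xs[j := a]) ys = X j $$ (a, ys ! j) * (\<Prod>i\<in>{..<n} - {j}. X i $$ (xs ! i, ys ! i))"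
proof -
  have l: "length xs = n" using xs by (simp add: idx_def)
  have "prod_op n d X (xs[j := a]) ys = (\<Prod>i<n. X i $$ (xs[j := a] ! i, ys ! i))"
    using idx_update[OF xs j a] ys unfolding prod_op_def by simp
  also have "\<dots> = X j $$ (xs[j := a] ! j, ys ! j) * (\<Prod>i\<in>{..<n} - {j}. X i $$ (xs[j := a] ! i, ys ! i))"
    using j by (subst prod.remove[of _ j]) auto
  also have "\<dots> = X j $$ (a, ys ! j) * (\<Prod>i\<in>{..<n} - {j}. X i $$ (xs ! i, ys ! i))"
    using l j by (auto intro!: prod.cong)
  finally show ?thesis .
qed

section \<open>Kraus maps with a pure output\<close>

lemma sum_list_mult_cnj: "(\<Sum>k\<leftarrow>ks. w k * cnj (w k)) = of_real (\<Sum>k\<leftarrow>ks. (cmod (w k))\<^sup>2)"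
  by (induction ks) (simp_all add: complex_norm_square del: of_real_power)

lemma proportional_if_sum_outer_eq_outer:
  fixes v :: "'k \<Rightarrow> 'x \<Rightarrow> complex"
  assumes outer: "\<And>x y. x \<in> I \<Longrightarrow> y \<in> I \<Longrightarrow> (\<Sum>k\<leftarrow>ks. v k x * cnj (v k y)) = b x * cnj (b y)"
    and x0: "x0 \<in> I" "b x0 \<noteq> 0" and k: "k \<in> set ks" and x: "x \<in> I"
  shows "v k x = (v k x0 / b x0) * b x"
proof -
  \<comment> \<open>the vectors w k = b x0 v k x - b x v k x0 have total squared length 0\<close>
  define w where "w k = b x0 * v k x - b x * v k x0" for k
  have "(\<Sum>k\<leftarrow>ks. w k * cnj (w k))
      = (b x0 * cnj (b x0)) * (\<Sum>k\<leftarrow>ks. v k x * cnj (v k x))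
      - (b x0 * cnj (b x)) * (\<Sum>k\<leftarrow>ks. v k x * cnj (v k x0))
      - (b x * cnj (b x0)) * (\<Sum>k\<leftarrow>ks. v k x0 * cnj (v k x))
      + (b x * cnj (b x)) * (\<Sum>k\<leftarrow>ks. v k x0 * cnj (v k x0))"
    unfolding w_def
    by (simp add: algebra_simps sum_list_addf sum_list_subtractf sum_list_const_mult)
  also have "\<dots> = 0" using outer x x0 by (simp add: algebra_simps)
  finally have "(\<Sum>k\<leftarrow>ks. (cmod (w k))\<^sup>2) = 0"
    unfolding sum_list_mult_cnj by simp
  then have "\<forall>r\<in>set (map (\<lambda>k. (cmod (w k))\<^sup>2) ks). r = 0"
    by (subst sum_list_nonneg_eq_0_iff[symmetric]) auto
  then have "w k = 0" using k by simp
  then show ?thesis using x0 unfolding w_def by (simp add: field_simps)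
qed

lemma kraus_apply_ketbra:
  "kraus_apply n d Ks (ketbra a a)
    = (\<lambda>xs ys. \<Sum>K\<leftarrow>Ks. op_apply n d (prod_op n d K) a xs * cnj (op_apply n d (prod_op n d K) a ys))"
  unfolding kraus_apply_def ketbra_sandwich by (simp add: ketbra_def)

lemma kraus_pure_output_proportional:
  assumes kr: "kraus_apply n d Ks (ketbra a a) = ketbra b b"
    and b: "in_space n d b" and x0: "x0 \<in> idx n d" "b x0 \<noteq> 0"
  obtains c where "\<forall>K\<in>set Ks. op_apply n d (prod_op n d K) a = (\<lambda>xs. c K * b xs)"
    "(\<Sum>K\<leftarrow>Ks. (cmod (c K))\<^sup>2) = 1"
proof
  define c where "c K = op_apply n d (prod_op n d K) a x0 / b x0" for K
  have outer: "(\<Sum>K\<leftarrow>Ks. op_apply n d (prod_op n d K) a x * cnj (op_apply n d (prod_op n d K) a y))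
      = b x * cnj (b y)" for x y
    using fun_cong[OF fun_cong[OF kr, of x], of y] unfolding kraus_apply_ketbra by (simp add: ketbra_def)
  show proportional: "\<forall>K\<in>set Ks. op_apply n d (prod_op n d K) a = (\<lambda>xs. c K * b xs)"
  proof (intro ballI ext)
    fix K xs assume K: "K \<in> set Ks"
    show "op_apply n d (prod_op n d K) a xs = c K * b xs"
    proof (cases "xs \<in> idx n d")
      case True
      show ?thesis unfolding c_def
        by (rule proportional_if_sum_outer_eq_outer[where I="idx n d" and ks=Ks
              and v="\<lambda>K. op_apply n d (prod_op n d K) a"]) (use outer x0 K True in auto)
    next
      case False
      then show ?thesis
        using b in_space_op_apply[OF op_supported_prod_op, of n d K a] by (simp add: in_space_def)
    qed
  qed
  have "(\<Sum>K\<leftarrow>Ks. op_apply n d (prod_op n d K) a x0 * cnj (op_apply n d (prod_op n d K) a x0))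
      = (\<Sum>K\<leftarrow>Ks. c K * cnj (c K) * (b x0 * cnj (b x0)))"
    using proportional by (intro arg_cong[where f = sum_list] map_cong) auto
  then have "(\<Sum>K\<leftarrow>Ks. c K * cnj (c K)) * (b x0 * cnj (b x0)) = b x0 * cnj (b x0)"
    using outer[of x0 x0] by (simp add: sum_list_mult_const)
  then have "(\<Sum>K\<leftarrow>Ks. c K * cnj (c K)) = 1" using x0 by simp
  then show "(\<Sum>K\<leftarrow>Ks. (cmod (c K))\<^sup>2) = 1"
    unfolding sum_list_mult_cnj by simp
qed

section \<open>Full entanglement\<close>

lemma left_null_vector_annihilates:
  fixes u :: "complex vec"
  assumes X: "local_mats n d X"
    and eig: "op_apply n d (prod_op n d X) psi = (\<lambda>xs. c * psi xs)" and c: "c \<noteq> 0"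
    and j: "j < n" and u: "\<And>b. b < d j \<Longrightarrow> (\<Sum>a<d j. u $ a * X j $$ (a, b)) = 0"
    and xs: "xs \<in> idx n d"
  shows "(\<Sum>a<d j. u $ a * psi (xs[j := a])) = 0"
proof -
  define R where "R ys = (\<Prod>i\<in>{..<n} - {j}. X i $$ (xs ! i, ys ! i)) * psi ys" for ys
  have row: "op_apply n d (prod_op n d X) psi (xs[j := a]) = (\<Sum>ys\<in>idx n d. X j $$ (a, ys ! j) * R ys)"
    if "a < d j" for a
    unfolding op_apply_def R_def
    by (intro sum.cong refl) (simp add: prod_op_update_row[OF xs _ j that])
  have "c * (\<Sum>a<d j. u $ a * psi (xs[j := a]))
      = (\<Sum>a<d j. u $ a * op_apply n d (prod_op n d X) psi (xs[j := a]))"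
    unfolding eig by (simp add: sum_distrib_left ac_simps)
  also have "\<dots> = (\<Sum>ys\<in>idx n d. (\<Sum>a<d j. u $ a * X j $$ (a, ys ! j)) * R ys)"
    by (simp add: row sum_distrib_left sum_distrib_right ac_simps sum.swap[of _ "{..<d j}"])
  also have "\<dots> = 0"
    using u idx_nth[OF _ j] by (intro sum.neutral) auto
  finally show ?thesis using c by simp
qed

lemma reduced_det_zero_if_annihilated:
  fixes u :: "complex vec"
  assumes u: "u \<in> carrier_vec (d j)" "u \<noteq> 0\<^sub>v (d j)"
    and ann: "\<And>xs. xs \<in> idx n d \<Longrightarrow> (\<Sum>a<d j. u $ a * psi (xs[j := a])) = 0"
  shows "det (reduced n d psi j) = 0"
proof -
  define R where "R = reduced n d psi j"
  have R: "R \<in> carrier_mat (d j) (d j)" unfolding R_def reduced_def by auto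
  define v where "v = vec (d j) (\<lambda>b. cnj (u $ b))"
  have v: "v \<in> carrier_vec (d j)" unfolding v_def by auto
  have "v \<noteq> 0\<^sub>v (d j)"
  proof
    assume "v = 0\<^sub>v (d j)"
    then have "\<forall>b<d j. u $ b = 0"
      unfolding v_def by (metis index_vec index_zero_vec(1) complex_cnj_zero_iff)
    then have "u = 0\<^sub>v (d j)" using u(1) by (intro eq_vecI) auto
    then show False using u(2) by simp
  qed
  moreover have "R *\<^sub>v v = 0\<^sub>v (d j)"
  proof (intro eq_vecI)
    fix a assume "a < dim_vec (0\<^sub>v (d j) :: complex vec)"
    then have a: "a < d j" by simp
    have "(R *\<^sub>v v) $ a = (\<Sum>b<d j. R $$ (a, b) * cnj (u $ b))"
      using a R v unfolding v_def by (simp add: scalar_prod_def atLeast0LessThan)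
    also have "\<dots> = (\<Sum>xs\<in>{xs\<in>idx n d. xs ! j = a}. psi xs * cnj (\<Sum>b<d j. u $ b * psi (xs[j := b])))"
      using a unfolding R_def reduced_def
      by (simp add: sum_distrib_left sum_distrib_right ac_simps sum.swap[of _ "{..<d j}"])
    also have "\<dots> = 0" using ann by (intro sum.neutral) auto
    finally show "(R *\<^sub>v v) $ a = 0\<^sub>v (d j) $ a" using a by simp
  qed (use R in simp)
  ultimately show ?thesis
    unfolding R_def[symmetric] using det_0_iff_vec_prod_zero_field[OF R] v by auto
qed

text \<open>A vector u in the left kernel of a local factor X j would produce the vector conj u in the
  kernel of the reduced density matrix of party j.\<close>

lemma fully_entangled_eigen_det_nonzero:
  assumes full: "fully_entangled n d psi" and X: "local_mats n d X"
    and eig: "op_apply n d (prod_op n d X) psi = (\<lambda>xs. c * psi xs)" and c: "c \<noteq> 0"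
    and j: "j < n"
  shows "det (X j) \<noteq> 0"
proof
  assume "det (X j) = 0"
  have Xj: "X j \<in> carrier_mat (d j) (d j)" using X j by (simp add: local_mats_def)
  then have "det (transpose_mat (X j)) = 0" using \<open>det (X j) = 0\<close> by (simp add: det_transpose)
  then obtain u where u: "u \<in> carrier_vec (d j)" "u \<noteq> 0\<^sub>v (d j)"
    and ker: "transpose_mat (X j) *\<^sub>v u = 0\<^sub>v (d j)"
    using det_0_iff_vec_prod_zero_field[of "transpose_mat (X j)" "d j"] Xj by auto
  have left_null: "(\<Sum>a<d j. u $ a * X j $$ (a, b)) = 0" if b: "b < d j" for b
  proof -
    have "(transpose_mat (X j) *\<^sub>v u) $ b = 0" using ker b by simp
    then show ?thesis using b Xj u(1) by (simp add: scalar_prod_def atLeast0LessThan mult.commute)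
  qed
  have "det (reduced n d psi j) = 0"
  proof (rule reduced_det_zero_if_annihilated[where u = u])
    show "u \<in> carrier_vec (d j)" "u \<noteq> 0\<^sub>v (d j)" by (fact u)+
  qed (rule left_null_vector_annihilates[OF X eig c j left_null])
  then have "vec_space.rank (d j) (reduced n d psi j) \<noteq> d j"
    using vec_space.det_rank_iff[of "reduced n d psi j" "d j"] by (auto simp: reduced_def)
  then show False using full j by (simp add: fully_entangled_def)
qed

lemma op_trace_unitary_conj:
  assumes U: "local_U n d U" and A: "op_supported n d A"
  shows "op_trace n d (op_mult n d (op_mult n d (op_adj (prod_op n d U)) A) (prod_op n d U)) = op_trace n d A"
proof -
  have mats: "local_mats n d U" using U by (auto simp: local_U_def unitary_mat_def local_mats_def)
  have "op_mult n d (prod_op n d U) (op_adj (prod_op n d U)) = op_id n d"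
    unfolding prod_op_adj[OF mats] prod_op_mult[OF mats local_mats_cadj[OF mats]] prod_op_one[symmetric]
    using U by (intro prod_op_cong) (simp add: local_U_def unitary_mat_mult_cadj)
  then show ?thesis
    by (simp add: op_trace_commute[of n d _ "prod_op n d U"] op_mult_assoc[symmetric] op_mult_id_left[OF A])
qed

section \<open>Transformations within one SLOCC orbit\<close>

lemma SEP1_transformable_refl:
  assumes "in_space n d v"
  shows "SEP1_transformable n d v v"
proof -
  have "trace_preserving n d [\<lambda>j. 1\<^sub>m (d j)]"
    by (simp add: trace_preserving_def prod_op_one op_adj_id op_mult_id_left op_supported_id)
  moreover have "kraus_apply n d [\<lambda>j. 1\<^sub>m (d j)] (ketbra v v) = ketbra v v"
    by (simp add: kraus_apply_def prod_op_one op_adj_id ketbra_sandwich op_apply_id assms)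
  ultimately show ?thesis
    unfolding SEP1_transformable_def using local_GL_one by (intro exI[of _ "[\<lambda>j. 1\<^sub>m (d j)]"]) auto
qed

lemma SEP_transformable_if_SEP1: "SEP1_transformable n d a b \<Longrightarrow> SEP_transformable n d a b"
  unfolding SEP1_transformable_def SEP_transformable_def local_GL_def by blast

lemma op_id_mem_stabilizer:
  assumes "in_space n d psi"
  shows "op_id n d \<in> stabilizer n d psi"
proof -
  have "op_id n d = prod_op n d (\<lambda>j. 1\<^sub>m (d j))" by (simp add: prod_op_one)
  then show ?thesis
    unfolding stabilizer_def using local_GL_one op_apply_id[OF assms] by blast
qed

definition stabilizer_mixture :: "nat \<Rightarrow> (nat \<Rightarrow> nat) \<Rightarrow> state \<Rightarrow> oper \<Rightarrow> oper \<Rightarrow> bool" where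
  "stabilizer_mixture n d psi H G \<longleftrightarrow> (\<exists>ps :: (real \<times> oper) list.
      (\<forall>(p, S)\<in>set ps. p \<ge> 0 \<and> S \<in> stabilizer n d psi)
    \<and> (\<Sum>(p, S)\<leftarrow>ps. p) = 1
    \<and> (\<lambda>xs ys. \<Sum>(p, S)\<leftarrow>ps. complex_of_real p * op_mult n d (op_mult n d (op_adj S) H) S xs ys) = G)"

lemma stabilizer_mixture_refl:
  assumes "in_space n d psi" and "op_supported n d H"
  shows "stabilizer_mixture n d psi H H"
proof -
  have "op_mult n d (op_mult n d (op_adj (op_id n d)) H) (op_id n d) = H"
    unfolding op_adj_id op_mult_id_left[OF assms(2)] op_mult_id_right[OF assms(2)] ..
  then show ?thesis
    unfolding stabilizer_mixture_def using op_id_mem_stabilizer[OF assms(1)]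
    by (intro exI[of _ "[(1, op_id n d)]"]) simp
qed

locale slocc_pair =
  fixes n :: nat and d :: "nat \<Rightarrow> nat" and psi :: state and g h :: "nat \<Rightarrow> complex mat"
  assumes psi_in: "in_space n d psi"
    and full: "fully_entangled n d psi"
    and stab_unitary: "\<forall>S\<in>stabilizer n d psi. \<exists>U. local_U n d U \<and> S = prod_op n d U"
    and g_GL: "local_GL n d g" and h_GL: "local_GL n d h"
    and h_psi_nonzero: "\<exists>x\<in>idx n d. op_apply n d (prod_op n d h) psi x \<noteq> 0"
    and parties: "0 < n" \<comment> \<open>scalars are absorbed into the first local factor\<close>
begin

abbreviation "alpha \<equiv> op_apply n d (prod_op n d g) psi"
abbreviation "beta \<equiv> op_apply n d (prod_op n d h) psi"
abbreviation "G \<equiv> op_mult n d (op_adj (prod_op n d g)) (prod_op n d g)"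
abbreviation "H \<equiv> op_mult n d (op_adj (prod_op n d h)) (prod_op n d h)"

lemma op_supported_H: "op_supported n d H"
  by (intro op_supported_mult op_supported_adj op_supported_prod_op)

lemma op_trace_stabilizer_conj:
  assumes "S \<in> stabilizer n d psi"
  shows "op_trace n d (op_mult n d (op_mult n d (op_adj S) H) S) = op_trace n d H"
proof -
  obtain U where "local_U n d U" "S = prod_op n d U" using stab_unitary assms by blast
  then show ?thesis using op_trace_unitary_conj op_supported_H by simp
qed

lemma kraus_factor_stabilizer:
  assumes K: "local_mats n d K"
    and proportional: "op_apply n d (prod_op n d K) alpha = (\<lambda>xs. c * beta xs)" and c: "c \<noteq> 0"
  obtains S where "S \<in> stabilizer n d psi"
    "op_mult n d (prod_op n d K) (prod_op n d g) = op_scale c (op_mult n d (prod_op n d h) S)"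
proof -
  obtain hi where hi: "local_GL n d hi"
      "op_mult n d (prod_op n d h) (prod_op n d hi) = op_id n d"
      "op_mult n d (prod_op n d hi) (prod_op n d h) = op_id n d"
    using prod_op_inverse[OF h_GL] by blast
  define M where "M = op_mult n d (prod_op n d K) (prod_op n d g)"
  define X where "X j = hi j * (K j * g j)" for j
  have mats: "local_mats n d X"
    unfolding X_def using hi(1) K g_GL by (intro local_mats_mult) (simp_all add: local_GL_mats)
  have PX: "prod_op n d X = op_mult n d (prod_op n d hi) M"
    unfolding M_def X_def using hi(1) K g_GL
    by (simp add: prod_op_mult local_mats_mult local_GL_mats)
  have "op_apply n d (prod_op n d hi) beta = psi"
    by (simp add: op_apply_mult[symmetric] hi(3) op_apply_id psi_in)
  then have eig: "op_apply n d (prod_op n d X) psi = (\<lambda>xs. c * psi xs)"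
    by (simp add: PX M_def op_apply_mult proportional op_apply_scale_state)
  have "local_GL n d X"
    using mats fully_entangled_eigen_det_nonzero[OF full mats eig c]
    by (simp add: local_GL_iff_det_nonzero)
  \<comment> \<open>rescaling the first factor normalises the eigenvalue to 1\<close>
  define X' where "X' = X(0 := (1 / c) \<cdot>\<^sub>m X 0)"
  have X': "local_GL n d X'"
    unfolding X'_def using parties c \<open>local_GL n d X\<close> by (intro local_GL_scale_first) auto
  have PX': "prod_op n d X' = op_scale (1 / c) (prod_op n d X)"
    unfolding X'_def using parties mats by (intro prod_op_scale_first) (auto simp: local_mats_def)
  have "op_apply n d (prod_op n d X') psi = psi"
    using c by (simp add: PX' op_apply_scale eig)
  then have stab: "prod_op n d X' \<in> stabilizer n d psi"
    using X' unfolding stabilizer_def by blast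
  have "op_mult n d (prod_op n d h) (prod_op n d X') = op_scale (1 / c) M"
    by (simp add: PX' PX op_mult_scale_right op_mult_assoc[symmetric] hi(2) op_mult_id_left
        M_def op_supported_mult op_supported_prod_op)
  then have "M = op_scale c (op_mult n d (prod_op n d h) (prod_op n d X'))"
    using c by (simp add: op_scale_scale)
  then show ?thesis using that stab unfolding M_def by blast
qed

lemma stabilizer_kraus_op:
  assumes S: "S \<in> stabilizer n d psi" and gi: "local_GL n d gi" and p: "0 < p"
  obtains K where "local_GL n d K" "prod_op n d K
      = op_scale (of_real (sqrt p)) (op_mult n d (prod_op n d h) (op_mult n d S (prod_op n d gi)))"
proof -
  obtain L where L: "local_GL n d L" "S = prod_op n d L"
    using S unfolding stabilizer_def by blast
  define K where "K j = h j * (L j * gi j)" for j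
  have GL: "local_GL n d K"
    unfolding K_def using h_GL L(1) gi by (intro local_GL_mult)
  have K0: "K 0 \<in> carrier_mat (d 0) (d 0)"
    using GL parties by (simp add: local_GL_def local_mats_def)
  have "prod_op n d K = op_mult n d (prod_op n d h) (op_mult n d S (prod_op n d gi))"
    unfolding K_def L(2) using h_GL L(1) gi by (simp add: prod_op_mult local_mats_mult local_GL_mats)
  then show ?thesis
    using that[of "K(0 := of_real (sqrt p) \<cdot>\<^sub>m K 0)"] p
      local_GL_scale_first[OF parties GL]
      prod_op_scale_first[where n = n and d = d and K = K, OF parties K0]
    by simp
qed

lemma mixture_kraus_trace_preserving:
  assumes gi: "op_mult n d (prod_op n d g) (prod_op n d gi) = op_id n d"
    and Kf: "\<forall>e\<in>set ps. 0 \<le> fst e \<and> prod_op n d (Kf e) = op_scale (of_real (sqrt (fst e)))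
        (op_mult n d (prod_op n d h) (op_mult n d (snd e) (prod_op n d gi)))"
    and mixture: "(\<lambda>xs ys. \<Sum>e\<leftarrow>ps. of_real (fst e) * op_mult n d (op_mult n d (op_adj (snd e)) H) (snd e) xs ys) = G"
  shows "trace_preserving n d (map Kf ps)"
proof -
  let ?Gi = "prod_op n d gi"
  let ?T = "\<lambda>e. op_scale (of_real (fst e)) (op_mult n d (op_mult n d (op_adj (snd e)) H) (snd e))"
  have "op_mult n d (op_adj (prod_op n d (Kf e))) (prod_op n d (Kf e))
      = op_mult n d (op_mult n d (op_adj ?Gi) (?T e)) ?Gi" if "e \<in> set ps" for e
  proof -
    have "0 \<le> fst e" and K: "prod_op n d (Kf e) = op_scale (of_real (sqrt (fst e)))
        (op_mult n d (prod_op n d h) (op_mult n d (snd e) ?Gi))"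
      using Kf that by auto
    then show ?thesis unfolding K gram_scale
      by (simp add: op_adj_mult op_mult_assoc op_mult_scale_left op_mult_scale_right)
  qed
  then have "(\<lambda>xs ys. \<Sum>K\<leftarrow>map Kf ps. op_mult n d (op_adj (prod_op n d K)) (prod_op n d K) xs ys)
      = (\<lambda>xs ys. \<Sum>e\<leftarrow>ps. op_mult n d (op_mult n d (op_adj ?Gi) (?T e)) ?Gi xs ys)"
    by (intro ext) (simp add: cong: map_cong)
  also have "\<dots> = op_mult n d (op_mult n d (op_adj ?Gi) (\<lambda>xs ys. \<Sum>e\<leftarrow>ps. ?T e xs ys)) ?Gi"
    by (simp add: op_mult_sum_left op_mult_sum_right)
  also have "(\<lambda>xs ys. \<Sum>e\<leftarrow>ps. ?T e xs ys) = G"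
    using mixture by (simp add: op_scale_def)
  also have "op_mult n d (op_mult n d (op_adj ?Gi) G) ?Gi
      = op_mult n d (op_adj (op_mult n d (prod_op n d g) ?Gi)) (op_mult n d (prod_op n d g) ?Gi)"
    by (simp add: op_adj_mult op_mult_assoc)
  also have "\<dots> = op_id n d"
    by (simp add: gi op_adj_id op_mult_id_left op_supported_id)
  finally show ?thesis unfolding trace_preserving_def .
qed

lemma mixture_kraus_apply:
  assumes gi: "op_mult n d (prod_op n d gi) (prod_op n d g) = op_id n d"
    and Kf: "\<forall>e\<in>set ps. 0 \<le> fst e \<and> snd e \<in> stabilizer n d psi \<and> prod_op n d (Kf e)
        = op_scale (of_real (sqrt (fst e))) (op_mult n d (prod_op n d h) (op_mult n d (snd e) (prod_op n d gi)))"
    and sum1: "(\<Sum>e\<leftarrow>ps. fst e) = 1"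
  shows "kraus_apply n d (map Kf ps) (ketbra alpha alpha) = ketbra beta beta"
proof -
  have "op_apply n d (prod_op n d gi) alpha = psi"
    by (simp add: op_apply_mult[symmetric] gi op_apply_id psi_in)
  moreover have "op_apply n d (snd e) psi = psi" if "e \<in> set ps" for e
    using Kf that unfolding stabilizer_def by auto
  ultimately have image: "op_apply n d (prod_op n d (Kf e)) alpha = (\<lambda>xs. of_real (sqrt (fst e)) * beta xs)"
    if "e \<in> set ps" for e
    using Kf that by (simp add: op_apply_scale op_apply_mult)
  have "kraus_apply n d (map Kf ps) (ketbra alpha alpha) xs ys = ketbra beta beta xs ys" for xs ys
  proof -
    have "kraus_apply n d (map Kf ps) (ketbra alpha alpha) xs ys
        = (\<Sum>e\<leftarrow>ps. of_real (fst e) * (beta xs * cnj (beta ys)))"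
      unfolding kraus_apply_ketbra map_map o_def
    proof (intro arg_cong[where f = sum_list] map_cong refl)
      fix e assume e: "e \<in> set ps"
      then have "of_real (sqrt (fst e)) * of_real (sqrt (fst e)) = (of_real (fst e) :: complex)"
        using Kf by (simp flip: of_real_mult)
      then show "op_apply n d (prod_op n d (Kf e)) alpha xs * cnj (op_apply n d (prod_op n d (Kf e)) alpha ys)
          = of_real (fst e) * (beta xs * cnj (beta ys))"
        unfolding image[OF e] by (simp add: ac_simps)
    qed
    also have "\<dots> = ketbra beta beta xs ys"
      using arg_cong[OF sum1, of complex_of_real]
      by (simp add: sum_list_mult_const of_real_hom.hom_sum_list o_def ketbra_def)
    finally show ?thesis .
  qed
  then show ?thesis by blast
qed

lemma SEP1_transformable_if_stabilizer_mixture: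
  assumes "stabilizer_mixture n d psi H G"
  shows "SEP1_transformable n d alpha beta"
proof -
  let ?T = "\<lambda>S. op_mult n d (op_mult n d (op_adj S) H) S"
  obtain ps where ps: "\<forall>e\<in>set ps. 0 \<le> fst e \<and> snd e \<in> stabilizer n d psi"
    and sum1: "(\<Sum>e\<leftarrow>ps. fst e) = 1"
    and mixture: "(\<lambda>xs ys. \<Sum>e\<leftarrow>ps. of_real (fst e) * ?T (snd e) xs ys) = G"
    using assms unfolding stabilizer_mixture_def by (auto simp: split_def)
  \<comment> \<open>terms of weight zero would give non-invertible Kraus operators\<close>
  define qs where "qs = filter (\<lambda>e. 0 < fst e) ps"
  have qs: "\<forall>e\<in>set qs. 0 < fst e \<and> snd e \<in> stabilizer n d psi"
    using ps by (auto simp: qs_def)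
  have qsum: "(\<Sum>e\<leftarrow>qs. fst e) = 1"
    unfolding qs_def using ps sum1 by (subst sum_list_map_filter) auto
  have qmixture: "(\<lambda>xs ys. \<Sum>e\<leftarrow>qs. of_real (fst e) * ?T (snd e) xs ys) = G"
    unfolding mixture[symmetric] qs_def using ps by (intro ext sum_list_map_filter) auto
  obtain gi where gi: "local_GL n d gi" "op_mult n d (prod_op n d g) (prod_op n d gi) = op_id n d"
      "op_mult n d (prod_op n d gi) (prod_op n d g) = op_id n d"
    using prod_op_inverse[OF g_GL] by blast
  have "\<exists>K. local_GL n d K \<and> prod_op n d K = op_scale (of_real (sqrt (fst e)))
      (op_mult n d (prod_op n d h) (op_mult n d (snd e) (prod_op n d gi)))" if e: "e \<in> set qs" for e
  proof -
    obtain K where "local_GL n d K" "prod_op n d K = op_scale (of_real (sqrt (fst e)))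
        (op_mult n d (prod_op n d h) (op_mult n d (snd e) (prod_op n d gi)))"
      using stabilizer_kraus_op[where S = "snd e" and gi = gi and p = "fst e"] qs e gi(1) by auto
    then show ?thesis by blast
  qed
  then obtain Kf where Kf: "\<forall>e\<in>set qs. local_GL n d (Kf e) \<and> prod_op n d (Kf e) = op_scale
      (of_real (sqrt (fst e))) (op_mult n d (prod_op n d h) (op_mult n d (snd e) (prod_op n d gi)))"
    by metis
  have "trace_preserving n d (map Kf qs)"
    using Kf qs by (intro mixture_kraus_trace_preserving[OF gi(2) _ qmixture]) auto
  moreover have "kraus_apply n d (map Kf qs) (ketbra alpha alpha) = ketbra beta beta"
    using Kf qs by (intro mixture_kraus_apply[OF gi(3) _ qsum]) auto
  ultimately show ?thesis
    unfolding SEP1_transformable_def using Kf by (intro exI[of _ "map Kf qs"]) auto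
qed

end

locale pure_sep_channel = slocc_pair +
  fixes Ks :: "(nat \<Rightarrow> complex mat) list" and c :: "(nat \<Rightarrow> complex mat) \<Rightarrow> complex"
  assumes kraus_mats: "\<forall>K\<in>set Ks. local_mats n d K"
    and kraus_tp: "trace_preserving n d Ks"
    and kraus_proportional:
      "\<forall>K\<in>set Ks. op_apply n d (prod_op n d K) (op_apply n d (prod_op n d g) psi)
         = (\<lambda>xs. c K * op_apply n d (prod_op n d h) psi xs)"
    and coeff_norm: "(\<Sum>K\<leftarrow>Ks. (cmod (c K))\<^sup>2) = 1"
begin

abbreviation "Kg K \<equiv> op_mult n d (prod_op n d K) (prod_op n d g)"

lemma G_eq_sum_gram: "G = (\<lambda>xs ys. \<Sum>K\<leftarrow>Ks. op_mult n d (op_adj (Kg K)) (Kg K) xs ys)"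
proof -
  have "G = op_mult n d (op_adj (prod_op n d g)) (op_mult n d (op_id n d) (prod_op n d g))"
    by (simp add: op_mult_id_left op_supported_prod_op)
  also have "\<dots> = op_mult n d (op_adj (prod_op n d g)) (op_mult n d
      (\<lambda>xs ys. \<Sum>K\<leftarrow>Ks. op_mult n d (op_adj (prod_op n d K)) (prod_op n d K) xs ys) (prod_op n d g))"
    using kraus_tp unfolding trace_preserving_def by simp
  also have "\<dots> = (\<lambda>xs ys. \<Sum>K\<leftarrow>Ks. op_mult n d (op_adj (Kg K)) (Kg K) xs ys)"
    by (simp add: op_mult_sum_left op_mult_sum_right op_adj_mult op_mult_assoc)
  finally show ?thesis .
qed

lemma gram_Kg_stabilizer:
  assumes "K \<in> set Ks" and "c K \<noteq> 0"
  obtains S where "S \<in> stabilizer n d psi" "op_mult n d (op_adj (Kg K)) (Kg K)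
      = op_scale (of_real ((cmod (c K))\<^sup>2)) (op_mult n d (op_mult n d (op_adj S) H) S)"
proof -
  obtain S where S: "S \<in> stabilizer n d psi" "Kg K = op_scale (c K) (op_mult n d (prod_op n d h) S)"
    using kraus_factor_stabilizer[where K = K and c = "c K"] kraus_mats kraus_proportional assms
    by blast
  then show ?thesis
    using that unfolding S(2) gram_scale by (simp add: op_adj_mult op_mult_assoc)
qed

lemma op_trace_gram_Kg:
  assumes "K \<in> set Ks"
  shows "op_trace n d (op_mult n d (op_adj (Kg K)) (Kg K)) = of_real ((cmod (c K))\<^sup>2) * op_trace n d H
      + of_real (if c K = 0 then hs_norm_sq n d (Kg K) else 0)"
proof (cases "c K = 0")
  case True
  then show ?thesis by (simp add: op_trace_gram)
next
  case False
  then obtain S where "S \<in> stabilizer n d psi" "op_mult n d (op_adj (Kg K)) (Kg K)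
      = op_scale (of_real ((cmod (c K))\<^sup>2)) (op_mult n d (op_mult n d (op_adj S) H) S)"
    using gram_Kg_stabilizer assms by blast
  then show ?thesis using False by (simp add: op_trace_scale op_trace_stabilizer_conj)
qed

lemma op_trace_G:
  "op_trace n d G = op_trace n d H + of_real (\<Sum>K\<leftarrow>Ks. if c K = 0 then hs_norm_sq n d (Kg K) else 0)"
proof -
  have "op_trace n d G = (\<Sum>K\<leftarrow>Ks. op_trace n d (op_mult n d (op_adj (Kg K)) (Kg K)))"
    by (subst G_eq_sum_gram) (rule op_trace_sum)
  also have "\<dots> = (\<Sum>K\<leftarrow>Ks. of_real ((cmod (c K))\<^sup>2) * op_trace n d H
      + of_real (if c K = 0 then hs_norm_sq n d (Kg K) else 0))"
    using op_trace_gram_Kg by (intro arg_cong[where f = sum_list] map_cong) auto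
  also have "\<dots> = of_real (\<Sum>K\<leftarrow>Ks. (cmod (c K))\<^sup>2) * op_trace n d H
      + of_real (\<Sum>K\<leftarrow>Ks. if c K = 0 then hs_norm_sq n d (Kg K) else 0)"
    by (simp add: sum_list_addf sum_list_mult_const of_real_hom.hom_sum_list o_def)
  finally show ?thesis by (simp add: coeff_norm)
qed

lemma trace_H_le_trace_G: "Re (op_trace n d H) \<le> Re (op_trace n d G)"
proof -
  have "0 \<le> (\<Sum>K\<leftarrow>Ks. if c K = 0 then hs_norm_sq n d (Kg K) else 0)"
    by (intro sum_list_nonneg) (auto simp: hs_norm_sq_nonneg)
  then show ?thesis unfolding op_trace_G by simp
qed

lemma Kg_eq_0_if_trace_eq:
  assumes "op_trace n d G = op_trace n d H" and "K \<in> set Ks" and "c K = 0"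
  shows "Kg K = (\<lambda>_ _. 0)"
proof (rule hs_norm_sq_eq_0)
  have "(\<Sum>K\<leftarrow>Ks. if c K = 0 then hs_norm_sq n d (Kg K) else 0) = 0"
    using assms(1) unfolding op_trace_G by simp
  then have "\<forall>r\<in>set (map (\<lambda>K. if c K = 0 then hs_norm_sq n d (Kg K) else 0) Ks). r = 0"
    by (subst sum_list_nonneg_eq_0_iff[symmetric]) (auto simp: hs_norm_sq_nonneg)
  then show "hs_norm_sq n d (Kg K) = 0" using assms(2,3) by auto
qed (intro op_supported_mult op_supported_prod_op)

lemma stabilizer_mixture_if_trace_eq:
  assumes eq: "op_trace n d G = op_trace n d H"
  shows "stabilizer_mixture n d psi H G"
proof -
  let ?T = "\<lambda>S. op_mult n d (op_mult n d (op_adj S) H) S"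
  let ?Ks = "filter (\<lambda>K. c K \<noteq> 0) Ks"
  have "\<exists>S. S \<in> stabilizer n d psi \<and> op_mult n d (op_adj (Kg K)) (Kg K)
      = op_scale (of_real ((cmod (c K))\<^sup>2)) (?T S)" if "K \<in> set ?Ks" for K
    using gram_Kg_stabilizer[of K] that by auto
  then obtain SK where SK: "\<forall>K\<in>set ?Ks. SK K \<in> stabilizer n d psi \<and>
      op_mult n d (op_adj (Kg K)) (Kg K) = op_scale (of_real ((cmod (c K))\<^sup>2)) (?T (SK K))"
    by metis
  define ps where "ps = map (\<lambda>K. ((cmod (c K))\<^sup>2, SK K)) ?Ks"
  have "\<forall>(p, S)\<in>set ps. 0 \<le> p \<and> S \<in> stabilizer n d psi"
    using SK by (auto simp: ps_def)
  moreover have "(\<Sum>(p, S)\<leftarrow>ps. p) = 1"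
  proof -
    have "(\<Sum>(p, S)\<leftarrow>ps. p) = (\<Sum>K\<leftarrow>?Ks. (cmod (c K))\<^sup>2)"
      by (simp add: ps_def o_def)
    also have "\<dots> = (\<Sum>K\<leftarrow>Ks. (cmod (c K))\<^sup>2)"
      by (rule sum_list_map_filter) auto
    finally show ?thesis by (simp add: coeff_norm)
  qed
  moreover have "(\<lambda>xs ys. \<Sum>(p, S)\<leftarrow>ps. complex_of_real p * ?T S xs ys) = G"
  proof (intro ext)
    fix xs ys
    have "(\<Sum>(p, S)\<leftarrow>ps. complex_of_real p * ?T S xs ys)
        = (\<Sum>K\<leftarrow>?Ks. op_mult n d (op_adj (Kg K)) (Kg K) xs ys)"
      unfolding ps_def using SK
      by (auto simp: o_def op_scale_def intro!: arg_cong[where f = sum_list] map_cong)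
    also have "\<dots> = (\<Sum>K\<leftarrow>Ks. op_mult n d (op_adj (Kg K)) (Kg K) xs ys)"
      by (rule sum_list_map_filter) (simp add: Kg_eq_0_if_trace_eq[OF eq])
    also have "\<dots> = G xs ys"
      using fun_cong[OF fun_cong[OF G_eq_sum_gram, of xs], of ys] by simp
    finally show "(\<Sum>(p, S)\<leftarrow>ps. complex_of_real p * ?T S xs ys) = G xs ys" .
  qed
  ultimately show ?thesis unfolding stabilizer_mixture_def by blast
qed

end

context slocc_pair
begin

lemma pure_sep_channel_if_SEP_transformable:
  assumes "SEP_transformable n d alpha beta"
  obtains Ks c where "pure_sep_channel n d psi g h Ks c"
proof -
  obtain Ks where Ks: "\<forall>K\<in>set Ks. local_mats n d K" "trace_preserving n d Ks"
      "kraus_apply n d Ks (ketbra alpha alpha) = ketbra beta beta"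
    using assms unfolding SEP_transformable_def by blast
  obtain x0 where "x0 \<in> idx n d" "beta x0 \<noteq> 0" using h_psi_nonzero by blast
  then obtain c where "\<forall>K\<in>set Ks. op_apply n d (prod_op n d K) alpha = (\<lambda>xs. c K * beta xs)"
      "(\<Sum>K\<leftarrow>Ks. (cmod (c K))\<^sup>2) = 1"
    using kraus_pure_output_proportional[OF Ks(3) in_space_op_apply[OF op_supported_prod_op]] by blast
  then have "pure_sep_channel n d psi g h Ks c"
    using Ks by (intro pure_sep_channel.intro slocc_pair_axioms pure_sep_channel_axioms.intro)
  then show ?thesis by (rule that)
qed

lemma trace_le_if_SEP_transformable:
  assumes "SEP_transformable n d alpha beta"
  shows "Re (op_trace n d H) \<le> Re (op_trace n d G)"
proof -
  obtain Ks c where "pure_sep_channel n d psi g h Ks c"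
    using pure_sep_channel_if_SEP_transformable[OF assms] .
  then interpret pure_sep_channel n d psi g h Ks c .
  show ?thesis by (rule trace_H_le_trace_G)
qed

lemma stabilizer_mixture_if_SEP_transformable:
  assumes "SEP_transformable n d alpha beta" and "op_trace n d G = op_trace n d H"
  shows "stabilizer_mixture n d psi H G"
proof -
  obtain Ks c where "pure_sep_channel n d psi g h Ks c"
    using pure_sep_channel_if_SEP_transformable[OF assms(1)] .
  then interpret pure_sep_channel n d psi g h Ks c .
  show ?thesis by (rule stabilizer_mixture_if_trace_eq[OF assms(2)])
qed

end

theorem lemma2:
  fixes n :: nat and d :: "nat \<Rightarrow> nat" and psi :: state
    and g h :: "nat \<Rightarrow> complex mat"
  assumes psi_in: "in_space n d psi"
    and psi_norm: "vnorm n d psi = 1"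
    and full: "fully_entangled n d psi"
    and stab_unitary: "\<forall>S\<in>stabilizer n d psi. \<exists>U. local_U n d U \<and> S = prod_op n d U"
    and g_GL: "local_GL n d g" and h_GL: "local_GL n d h"
    and g_norm: "vnorm n d (op_apply n d (prod_op n d g) psi) = 1"
    and h_norm: "vnorm n d (op_apply n d (prod_op n d h) psi) = 1"
  defines "G \<equiv> op_mult n d (op_adj (prod_op n d g)) (prod_op n d g)"
    and "H \<equiv> op_mult n d (op_adj (prod_op n d h)) (prod_op n d h)"
  shows "(SEP_transformable n d (op_apply n d (prod_op n d g) psi) (op_apply n d (prod_op n d h) psi)
            \<longrightarrow> Re (op_trace n d G) \<ge> Re (op_trace n d H))
    \<and> (op_trace n d G = op_trace n d H \<longrightarrow>
         (SEP_transformable n d (op_apply n d (prod_op n d g) psi) (op_apply n d (prod_op n d h) psi)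
            \<longleftrightarrow> (\<exists>ps :: (real \<times> oper) list.
                   (\<forall>(p, S)\<in>set ps. p \<ge> 0 \<and> S \<in> stabilizer n d psi)
                 \<and> (\<Sum>(p, S)\<leftarrow>ps. p) = 1
                 \<and> (\<lambda>xs ys. \<Sum>(p, S)\<leftarrow>ps. complex_of_real p *
                       op_mult n d (op_mult n d (op_adj S) H) S xs ys) = G))
       \<and> (SEP_transformable n d (op_apply n d (prod_op n d g) psi) (op_apply n d (prod_op n d h) psi)
            \<longleftrightarrow> SEP1_transformable n d (op_apply n d (prod_op n d g) psi) (op_apply n d (prod_op n d h) psi)))"
proof (cases "n = 0")
  case True
  then have P: "prod_op n d g = op_id n d" "prod_op n d h = op_id n d"
    by (simp_all add: prod_op_no_parties)
  then have "G = op_id n d" "H = op_id n d"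
    unfolding G_def H_def by (simp_all add: op_adj_id op_mult_id_left op_supported_id)
  then show ?thesis
    using SEP1_transformable_refl[OF psi_in] SEP_transformable_if_SEP1
      stabilizer_mixture_refl[OF psi_in op_supported_id]
    unfolding P op_apply_id[OF psi_in] stabilizer_mixture_def by auto
next
  case False
  \<comment> \<open>of the normalisation hypotheses only h psi \<noteq> 0 is needed\<close>
  have "\<exists>x\<in>idx n d. op_apply n d (prod_op n d h) psi x \<noteq> 0"
    using h_norm by (rule_tac ccontr) (simp add: vnorm_def)
  then interpret slocc_pair n d psi g h
    using psi_in full stab_unitary g_GL h_GL False by unfold_locales auto
  show ?thesis
    unfolding G_def H_def
    using trace_le_if_SEP_transformable stabilizer_mixture_if_SEP_transformable
      SEP1_transformable_if_stabilizer_mixture SEP_transformable_if_SEP1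
    unfolding stabilizer_mixture_def by blast
qed

end
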